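(* Let $p>1$ be an integer. Then the point spectrum of $U_p$ on $\mathcal{R}$, i.e. the set of $\lambda\in\mathbb{R}$ for which there is a nonzero $f\in\mathcal{R}$ with $U_pf=\lambda f$, is \[\operatorname{spec}(U_p)=\{\pm p^{k}\,:\,k\in\mathbb{N}\}\cup\{0\},\] where $\mathbb{N}=\{0,1,2,\dots\}$.
   Context: $\mathcal{R}$ denotes the real vector space of rational functions $f(x)=A(x)/B(x)$ with $A,B\in\mathbb{R}[x]$, $B(0)\neq 0$ and $\deg A<\deg B$. For $f\in\mathcal{R}$ with Taylor expansion $f(x)=\sum_{n\ge0}a_nx^n$ at $0$ and a positive integer $p$, the Hecke operator $U_p$ is defined by $U_pf(x)=\sum_{n\ge 0}a_{pn}x^n$; this is again an element of $\mathcal{R}$. *)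

theory Defs
  imports "HOL-Computational_Algebra.Computational_Algebra"
begin

text \<open>Elements of the space R are identified with their Taylor expansions at 0,
  i.e. formal power series. f is in R iff f = A/B (as power series) with
  B(0) nonzero and deg A < deg B.\<close>

definition ratfun_space :: "real fps set" where
  "ratfun_space = {fps_of_poly A / fps_of_poly B | A B.
      poly B 0 \<noteq> 0 \<and> degree A < degree B}"

definition hecke_U :: "nat \<Rightarrow> real fps \<Rightarrow> real fps" where
  "hecke_U p f = Abs_fps (\<lambda>n. fps_nth f (p * n))"

definition point_spectrum_U :: "nat \<Rightarrow> real set" where
  "point_spectrum_U p = {c. \<exists>f \<in> ratfun_space. f \<noteq> 0 \<and> hecke_U p f = fps_const c * f}"

end

theory Submission
  imports Defs
begin

text \<open>For \<open>p > 1\<close> the rational series with coefficient sequences \<open>[n \<equiv> 1 mod p]\<close>, \<open>1\<close>,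
  and the odd \<open>(p + 1)\<close>-periodic sequence supported on the residues \<open>\<plusminus>1\<close> are eigenvectors
  of \<open>U\<^sub>p\<close> for \<open>0\<close>, \<open>1\<close> and \<open>-1\<close>; the Euler operator \<open>x d/dx\<close> preserves rationality
  and multiplies \<open>U\<^sub>p\<close>-eigenvalues by \<open>p\<close>.

  Conversely, over \<open>\<complex>\<close> the coefficients of a proper rational function form an
  exponential polynomial \<open>\<Sum>\<^sub>\<alpha> P\<^sub>\<alpha>(n) \<alpha>\<^sup>n\<close>, and its polynomials \<open>P\<^sub>\<alpha>\<close> are unique.
  Hence \<open>U\<^sub>p f = c f\<close> forces \<open>\<Sum>\<^bsub>\<alpha>\<^sup>p = \<beta>\<^esub> P\<^sub>\<alpha>(p x) = c P\<^sub>\<beta>(x)\<close>. Comparing coefficients of \<open>x\<^sup>j\<close>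
  shows that \<open>\<alpha> \<mapsto> \<alpha>\<^sup>p\<close> permutes the finite set of \<open>\<alpha>\<close> whose \<open>P\<^sub>\<alpha>\<close> has a nonzero
  \<open>x\<^sup>j\<close>-coefficient \<open>e(\<alpha>)\<close>, with \<open>c e(\<alpha>\<^sup>p) = p\<^sup>j e(\<alpha>)\<close>; multiplying over this set gives
  \<open>c\<^sup>N = p\<^sup>j\<^sup>N\<close>, so \<open>|c| = p\<^sup>j\<close>.\<close>

section \<open>Rational eigenvectors\<close>

lemma fps_eq_divide_iff:
  fixes f g h :: "'a::field fps"
  assumes "g $ 0 \<noteq> 0"
  shows "f = h / g \<longleftrightarrow> f * g = h"
  using assms by (auto simp: fps_divide_unit mult.assoc inverse_mult_eq_1')

lemma ratfun_space_iff:
  "f \<in> ratfun_space \<longleftrightarrow>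
     (\<exists>A B. poly B 0 \<noteq> 0 \<and> degree A < degree B \<and> f * fps_of_poly B = fps_of_poly A)"
proof -
  have "f = fps_of_poly A / fps_of_poly B \<longleftrightarrow> f * fps_of_poly B = fps_of_poly A"
    if "poly B 0 \<noteq> 0" for A B :: "real poly"
    using that by (intro fps_eq_divide_iff) (simp add: poly_0_coeff_0)
  then show ?thesis
    unfolding ratfun_space_def by blast
qed

lemma periodic_fps_in_ratfun_space:
  fixes N :: "real poly"
  assumes "0 < M" "degree N < M"
  shows "Abs_fps (\<lambda>n. coeff N (n mod M)) \<in> ratfun_space"
  unfolding ratfun_space_iff
proof (intro exI conjI)
  show "poly (1 - monom 1 M) 0 \<noteq> (0::real)"
    using assms by (simp add: poly_0_coeff_0 coeff_monom)
  have "degree (1 + - monom 1 M :: real poly) = M"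
    using assms by (subst degree_add_eq_right) (simp_all add: degree_monom_eq)
  then show "degree N < degree (1 - monom 1 M :: real poly)"
    using assms by simp
  show "Abs_fps (\<lambda>n. coeff N (n mod M)) * fps_of_poly (1 - monom 1 M) = fps_of_poly N"
  proof (rule fps_ext)
    fix n
    have "coeff N n = 0" if "M \<le> n"
      using that assms by (intro coeff_eq_0) simp
    then show "(Abs_fps (\<lambda>n. coeff N (n mod M)) * fps_of_poly (1 - monom 1 M)) $ n
        = fps_of_poly N $ n"
      by (cases "n < M")
        (simp_all add: fps_of_poly_diff fps_of_poly_monom' algebra_simps
          fps_X_power_mult_nth le_mod_geq)
  qed
qed

definition fps_euler_op :: "'a::comm_ring_1 fps \<Rightarrow> 'a fps" where
  "fps_euler_op f = fps_X * fps_deriv f"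

lemma fps_euler_op_power_nth: "((fps_euler_op ^^ k) f) $ n = of_nat n ^ k * f $ n"
  by (induction k) (simp_all add: fps_euler_op_def fps_mult_fps_X_deriv_shift)

lemma degree_pderiv_mult_le:
  fixes A B :: "'a::{comm_semiring_1,semiring_no_zero_divisors,semiring_char_0} poly"
  shows "degree (pderiv A * B) \<le> degree A + degree B - 1"
proof (cases "degree A = 0")
  case True
  then have "pderiv A = 0"
    by (simp add: pderiv_eq_0_iff)
  then show ?thesis by simp
next
  case False
  then show ?thesis
    using degree_mult_le[of "pderiv A" B] by (simp add: degree_pderiv)
qed

text \<open>Quotient rule: the Euler operator maps \<open>A / B\<close> to \<open>x (A' B - A B') / B\<^sup>2\<close>.\<close>

lemma fps_euler_op_in_ratfun_space:
  assumes "f \<in> ratfun_space"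
  shows "fps_euler_op f \<in> ratfun_space"
proof -
  obtain A B where AB: "poly B 0 \<noteq> 0" "degree A < degree B" "f * fps_of_poly B = fps_of_poly A"
    using assms unfolding ratfun_space_iff by blast
  define N where "N = [:0, 1:] * (pderiv A * B - A * pderiv B)"
  have "degree (pderiv A * B - A * pderiv B) \<le> degree A + degree B - 1"
    using degree_pderiv_mult_le[of A B] degree_pderiv_mult_le[of B A]
    by (intro degree_diff_le) (simp_all add: mult.commute add.commute)
  then have "degree N \<le> degree A + degree B"
    unfolding N_def using degree_mult_le[of "[:0, 1:]" "pderiv A * B - A * pderiv B"] AB(2)
    by (cases "pderiv A * B - A * pderiv B = 0") auto
  moreover have "B \<noteq> 0"
    using AB(1) by auto
  ultimately have deg: "degree N < degree (B ^ 2)"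
    using AB(2) by (simp add: degree_power_eq)
  have deriv: "fps_deriv f * fps_of_poly B = fps_of_poly (pderiv A) - f * fps_of_poly (pderiv B)"
    using arg_cong[OF AB(3), of fps_deriv] by (simp add: fps_of_poly_pderiv algebra_simps)
  have "fps_euler_op f * fps_of_poly (B ^ 2) = fps_X * ((fps_deriv f * fps_of_poly B) * fps_of_poly B)"
    by (simp add: fps_euler_op_def fps_of_poly_power power2_eq_square mult.assoc)
  also have "\<dots> = fps_X * (fps_of_poly (pderiv A) * fps_of_poly B
      - (f * fps_of_poly B) * fps_of_poly (pderiv B))"
    unfolding deriv by (simp add: algebra_simps)
  also have "\<dots> = fps_of_poly N"
    unfolding N_def AB(3) by (simp add: fps_of_poly_mult fps_of_poly_diff algebra_simps)
  finally have "fps_euler_op f * fps_of_poly (B ^ 2) = fps_of_poly N" .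
  then show ?thesis
    unfolding ratfun_space_iff using AB(1) deg by (intro exI[of _ N] exI[of _ "B ^ 2"]) simp
qed

lemma hecke_U_nth [simp]: "hecke_U p f $ n = f $ (p * n)"
  by (simp add: hecke_U_def)

lemma hecke_U_eigen_iff: "hecke_U p f = fps_const c * f \<longleftrightarrow> (\<forall>n. f $ (p * n) = c * f $ n)"
  by (auto simp: fps_eq_iff)

lemma hecke_U_euler_op_power:
  assumes "hecke_U p f = fps_const c * f"
  shows "hecke_U p ((fps_euler_op ^^ k) f) = fps_const (real p ^ k * c) * (fps_euler_op ^^ k) f"
  using assms by (simp add: hecke_U_eigen_iff fps_euler_op_power_nth power_mult_distrib)

lemma point_spectrum_U_mult_power:
  assumes "f \<in> ratfun_space" "f $ 1 \<noteq> 0" "hecke_U p f = fps_const c * f"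
  shows "real p ^ k * c \<in> point_spectrum_U p"
  unfolding point_spectrum_U_def
proof (intro CollectI bexI conjI)
  show "(fps_euler_op ^^ k) f \<in> ratfun_space"
    using assms(1) by (induction k) (simp_all add: fps_euler_op_in_ratfun_space)
  show "(fps_euler_op ^^ k) f \<noteq> 0"
  proof
    assume "(fps_euler_op ^^ k) f = 0"
    then have "((fps_euler_op ^^ k) f) $ 1 = 0"
      by simp
    then show False
      using assms(2) by (simp add: fps_euler_op_power_nth)
  qed
  show "hecke_U p ((fps_euler_op ^^ k) f) = fps_const (real p ^ k * c) * (fps_euler_op ^^ k) f"
    using assms(3) by (rule hecke_U_euler_op_power)
qed

lemma zero_in_point_spectrum_U:
  assumes "p > 1"
  shows "0 \<in> point_spectrum_U p"
proof -
  let ?f = "Abs_fps (\<lambda>n. coeff [:0, 1 :: real:] (n mod p))"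
  have "?f \<in> ratfun_space"
    using assms by (intro periodic_fps_in_ratfun_space) auto
  moreover have "?f $ 1 \<noteq> 0"
    using assms by simp
  moreover have "hecke_U p ?f = fps_const 0 * ?f"
    unfolding hecke_U_eigen_iff by simp
  ultimately show ?thesis
    using point_spectrum_U_mult_power[of ?f p 0 0] by simp
qed

lemma power_in_point_spectrum_U: "real p ^ k \<in> point_spectrum_U p"
proof -
  let ?f = "Abs_fps (\<lambda>n. coeff (1 :: real poly) (n mod 1))"
  have "?f \<in> ratfun_space"
    by (intro periodic_fps_in_ratfun_space) auto
  moreover have "hecke_U p ?f = fps_const 1 * ?f"
    unfolding hecke_U_eigen_iff by simp
  ultimately show ?thesis
    using point_spectrum_U_mult_power[of ?f p 1 k] by simp
qed

lemma mult_mod_Suc_self: "(p * n) mod Suc p = (Suc p - n mod Suc p) mod Suc p"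
proof (cases "n mod Suc p")
  case 0
  then show ?thesis
    by auto
next
  case (Suc j)
  then have "j \<le> p"
    using mod_less_divisor[of "Suc p" n] by simp
  then have "p * Suc j = (p - j) + j * Suc p"
    by simp
  then have "(p * n) mod Suc p = (p - j) mod Suc p"
    using Suc by (metis mod_mult_right_eq mod_mult_self1)
  then show ?thesis
    using Suc by simp
qed

text \<open>As \<open>p \<equiv> -1 (mod p + 1)\<close>, multiplication by \<open>p\<close> maps the residue \<open>m\<close> to \<open>-m\<close> and so
  negates the odd sequence below.\<close>

lemma neg_power_in_point_spectrum_U:
  assumes "p > 1"
  shows "- (real p ^ k) \<in> point_spectrum_U p"
proof -
  define N :: "real poly" where "N = [:0, 1:] - monom 1 p"
  have coeff_N: "coeff N m = (if m = 1 then 1 else 0) - (if m = p then 1 else 0)" for m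
    by (simp add: N_def coeff_monom coeff_pCons split: nat.split)
  let ?f = "Abs_fps (\<lambda>n. coeff N (n mod Suc p))"
  have "degree N < Suc p"
    unfolding N_def using assms by (intro degree_diff_less) (simp_all add: degree_monom_eq)
  then have "?f \<in> ratfun_space"
    by (intro periodic_fps_in_ratfun_space) auto
  moreover have "?f $ 1 \<noteq> 0"
    using assms by (simp add: coeff_N)
  moreover have "hecke_U p ?f = fps_const (- 1) * ?f"
    unfolding hecke_U_eigen_iff
  proof
    fix n
    define m where "m = n mod Suc p"
    have "(Suc p - m) mod Suc p = (if m = 0 then 0 else Suc p - m)"
      using mod_less_divisor[of "Suc p" n] unfolding m_def by (cases "m = 0") auto
    then show "?f $ (p * n) = - 1 * ?f $ n"
      using assms by (auto simp: mult_mod_Suc_self coeff_N simp flip: m_def)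
  qed
  ultimately show ?thesis
    using point_spectrum_U_mult_power[of ?f p "- 1" k] by simp
qed

lemma point_spectrum_U_superset:
  assumes "p > 1"
  shows "{c. \<exists>k::nat. c = real p ^ k \<or> c = - (real p ^ k)} \<union> {0} \<subseteq> point_spectrum_U p"
  using assms zero_in_point_spectrum_U power_in_point_spectrum_U neg_power_in_point_spectrum_U
  by auto

section \<open>Exponential polynomials\<close>

lemma pcompose_monom: "pcompose (monom c k) q = smult c (q ^ k)"
  for q :: "'a::comm_semiring_1 poly"
  by (induction k) (simp_all add: monom_altdef pcompose_smult pcompose_mult pcompose_pCons)

lemma degree_leI_coeff_eq_0:
  fixes R :: "'a::zero poly"
  assumes "degree R \<le> k" "coeff R k = 0"
  shows "R = 0 \<or> degree R < k"
  using assms leading_coeff_0_iff[of R] by (cases "degree R = k") auto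

text \<open>Under \<open>b(n) \<mapsto> b(n + 1) - a b(n)\<close> a term \<open>Q(n) \<beta>\<^sup>n\<close> of an exponential polynomial
  becomes \<open>(twisted_difference \<beta> a Q)(n) \<beta>\<^sup>n\<close>.\<close>

definition twisted_difference :: "'a::comm_ring_1 \<Rightarrow> 'a \<Rightarrow> 'a poly \<Rightarrow> 'a poly" where
  "twisted_difference b a Q = smult b (pcompose Q [:1, 1:]) - smult a Q"

lemma poly_twisted_difference [simp]:
  "poly (twisted_difference b a Q) x = b * poly Q (x + 1) - a * poly Q x"
  by (simp add: twisted_difference_def poly_pcompose add.commute)

lemma twisted_difference_0 [simp]: "twisted_difference b a 0 = 0"
  by (simp add: twisted_difference_def)

lemma twisted_difference_add_smult:
  "twisted_difference b a (Q + smult c R) = twisted_difference b a Q + smult c (twisted_difference b a R)"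
  by (simp add: twisted_difference_def pcompose_add pcompose_smult smult_add_right
      smult_diff_right algebra_simps)

lemma degree_twisted_difference_le:
  fixes Q :: "'a::idom poly"
  shows "degree (twisted_difference b a Q) \<le> degree Q"
  unfolding twisted_difference_def
  by (intro degree_diff_le order_trans[OF degree_smult_le]) (simp_all add: degree_pcompose)

lemma coeff_twisted_difference_degree:
  fixes Q :: "'a::idom poly"
  shows "coeff (twisted_difference b a Q) (degree Q) = (b - a) * lead_coeff Q"
proof -
  have "coeff (pcompose Q [:1, 1:]) (degree Q) = lead_coeff Q"
    using lead_coeff_comp[of "[:1, 1:]" Q] by (simp add: degree_pcompose)
  then show ?thesis
    by (simp add: twisted_difference_def algebra_simps)
qed

text \<open>For \<open>r \<noteq> 1\<close> take \<open>Q = x\<^sup>k / (r - 1)\<close>, for \<open>r = 1\<close> take \<open>Q = x\<^sup>k\<^sup>+\<^sup>1 / (k + 1)\<close>.\<close>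

lemma twisted_difference_hits_monic:
  fixes r :: "'a::field_char_0"
  shows "\<exists>Q. degree (twisted_difference r 1 Q) \<le> k \<and> coeff (twisted_difference r 1 Q) k = 1"
proof (cases "r = 1")
  case False
  define Q where "Q = monom (1 / (r - 1)) k"
  have "twisted_difference r 1 Q = smult (1 / (r - 1)) (smult r ([:1, 1:] ^ k) - monom 1 k)"
    by (simp add: twisted_difference_def Q_def pcompose_monom smult_diff_right smult_monom
        mult.commute)
  moreover have "degree (smult r ([:1, 1:] ^ k) - monom 1 k :: 'a poly) \<le> k"
    by (intro degree_diff_le) (simp_all add: degree_linear_power degree_monom_le)
  ultimately show ?thesis
    using False by (intro exI[of _ Q]) (simp add: coeff_linear_power field_simps)
next
  case True
  define Q where "Q = monom (1 / (of_nat k + 1) :: 'a) (Suc k)"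
  have eq: "twisted_difference r 1 Q
      = smult (1 / (of_nat k + 1)) ([:1, 1:] ^ Suc k - monom 1 (Suc k))"
    by (simp only: twisted_difference_def Q_def True pcompose_monom smult_diff_right smult_monom
        smult_1_left mult_1_left mult_1_right)
  have "degree ([:1, 1:] ^ Suc k - monom 1 (Suc k) :: 'a poly) \<le> Suc k"
    by (intro degree_diff_le) (simp_all only: degree_linear_power degree_monom_le)
  moreover have "coeff ([:1, 1:] ^ Suc k - monom 1 (Suc k) :: 'a poly) (Suc k) = 0"
    by (simp del: power_Suc add: coeff_linear_power)
  ultimately have "degree ([:1, 1:] ^ Suc k - monom 1 (Suc k) :: 'a poly) \<le> k"
    using degree_leI_coeff_eq_0 by fastforce
  then have "degree (twisted_difference r 1 Q) \<le> k"
    unfolding eq by (rule order_trans[OF degree_smult_le])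
  moreover have "coeff (twisted_difference r 1 Q) k = 1"
    using of_nat_neq_0[of k, where ?'a = 'a] unfolding eq
    by (simp del: power_Suc add: coeff_linear_poly_power field_simps)
  ultimately show ?thesis
    by blast
qed

lemma twisted_difference_surj:
  fixes r :: "'a::field_char_0"
  shows "\<exists>Q. twisted_difference r 1 Q = P"
proof (induction "degree P" arbitrary: P rule: less_induct)
  case less
  obtain Q\<^sub>0 where Q\<^sub>0: "degree (twisted_difference r 1 Q\<^sub>0) \<le> degree P"
    "coeff (twisted_difference r 1 Q\<^sub>0) (degree P) = 1"
    using twisted_difference_hits_monic by blast
  define R where "R = P - smult (lead_coeff P) (twisted_difference r 1 Q\<^sub>0)"
  have "degree R \<le> degree P" "coeff R (degree P) = 0"
    unfolding R_def using Q\<^sub>0 by (auto intro!: degree_diff_le simp: degree_smult_le order_trans)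
  then have "R = 0 \<or> degree R < degree P"
    by (rule degree_leI_coeff_eq_0)
  then obtain Q\<^sub>1 where "twisted_difference r 1 Q\<^sub>1 = R"
    using less twisted_difference_0 by metis
  then have "twisted_difference r 1 (Q\<^sub>1 + smult (lead_coeff P) Q\<^sub>0) = P"
    by (simp add: twisted_difference_add_smult R_def)
  then show ?case
    by blast
qed

definition exp_poly :: "'a set \<Rightarrow> ('a \<Rightarrow> 'a poly) \<Rightarrow> nat \<Rightarrow> 'a::comm_semiring_1" where
  "exp_poly A P n = (\<Sum>\<alpha>\<in>A. poly (P \<alpha>) (of_nat n) * \<alpha> ^ n)"

text \<open>The base \<open>0\<close> is excluded: as \<open>0\<^sup>0 = 1\<close>, it would contribute sequences supported at
  \<open>n = 0\<close>, and the polynomial attached to it would not be unique.\<close>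

definition is_exp_poly :: "(nat \<Rightarrow> 'a::comm_semiring_1) \<Rightarrow> bool" where
  "is_exp_poly a \<longleftrightarrow> (\<exists>A P. finite A \<and> 0 \<notin> A \<and> a = exp_poly A P)"

lemma exp_poly_mono_support:
  assumes "finite B" "A \<subseteq> B" "\<And>\<alpha>. \<alpha> \<in> B - A \<Longrightarrow> P \<alpha> = 0"
  shows "exp_poly A P = exp_poly B P"
  unfolding exp_poly_def using assms by (intro ext sum.mono_neutral_left) auto

lemma exp_poly_restrict: "exp_poly A P = exp_poly A (\<lambda>\<alpha>. if \<alpha> \<in> A then P \<alpha> else 0)"
  unfolding exp_poly_def by (auto intro!: ext sum.cong)

lemma exp_poly_add: "exp_poly A (\<lambda>\<alpha>. P \<alpha> + Q \<alpha>) n = exp_poly A P n + exp_poly A Q n"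
  by (simp add: exp_poly_def sum.distrib algebra_simps)

lemma exp_poly_diff:
  "exp_poly A (\<lambda>\<alpha>. P \<alpha> - Q \<alpha>) n = exp_poly A P n - exp_poly A Q n"
  for P Q :: "'a::comm_ring_1 \<Rightarrow> 'a poly"
  by (simp add: exp_poly_def sum_subtractf algebra_simps)

lemma exp_poly_smult: "exp_poly A (\<lambda>\<alpha>. smult c (P \<alpha>)) n = c * exp_poly A P n"
  by (simp add: exp_poly_def sum_distrib_left mult.assoc)

lemma is_exp_poly_0: "is_exp_poly (\<lambda>_. 0)"
  unfolding is_exp_poly_def exp_poly_def by (intro exI[of _ "{}"]) auto

lemma is_exp_poly_monomial:
  "\<alpha> \<noteq> 0 \<Longrightarrow> is_exp_poly (\<lambda>n. poly Q (of_nat n) * \<alpha> ^ n)"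
  unfolding is_exp_poly_def exp_poly_def by (intro exI[of _ "{\<alpha>}"] exI[of _ "\<lambda>_. Q"]) auto

lemma is_exp_poly_add:
  assumes "is_exp_poly a" "is_exp_poly b"
  shows "is_exp_poly (\<lambda>n. a n + b n)"
proof -
  obtain A P where A: "finite A" "0 \<notin> A" "a = exp_poly A P"
    using assms(1) unfolding is_exp_poly_def by blast
  obtain B Q where B: "finite B" "0 \<notin> B" "b = exp_poly B Q"
    using assms(2) unfolding is_exp_poly_def by blast
  have "a = exp_poly (A \<union> B) (\<lambda>\<alpha>. if \<alpha> \<in> A then P \<alpha> else 0)"
    unfolding A(3) using A B by (subst exp_poly_restrict) (auto intro: exp_poly_mono_support)
  moreover have "b = exp_poly (A \<union> B) (\<lambda>\<alpha>. if \<alpha> \<in> B then Q \<alpha> else 0)"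
    unfolding B(3) using A B by (subst exp_poly_restrict) (auto intro: exp_poly_mono_support)
  ultimately have "(\<lambda>n. a n + b n) = exp_poly (A \<union> B)
      (\<lambda>\<alpha>. (if \<alpha> \<in> A then P \<alpha> else 0) + (if \<alpha> \<in> B then Q \<alpha> else 0))"
    by (simp add: fun_eq_iff exp_poly_add)
  then show ?thesis
    unfolding is_exp_poly_def using A B by blast
qed

lemma is_exp_poly_sum:
  "finite I \<Longrightarrow> (\<And>i. i \<in> I \<Longrightarrow> is_exp_poly (a i)) \<Longrightarrow> is_exp_poly (\<lambda>n. \<Sum>i\<in>I. a i n)"
  by (induction I rule: finite_induct) (simp_all add: is_exp_poly_0 is_exp_poly_add)

text \<open>If \<open>twisted_difference r 1 R = Q\<close> with \<open>r = \<beta> / \<alpha>\<close>, the sum telescopes: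
  \<open>\<Sum>k\<le>n. \<alpha>\<^bsup>n-k\<^esup> Q(k) \<beta>\<^sup>k = r R(n + 1) \<beta>\<^sup>n - R(0) \<alpha>\<^sup>n\<close>.\<close>

lemma is_exp_poly_geometric_convolution_monomial:
  fixes \<alpha> \<beta> :: "'a::field_char_0"
  assumes "\<alpha> \<noteq> 0" "\<beta> \<noteq> 0"
  shows "is_exp_poly (\<lambda>n. \<Sum>k\<le>n. \<alpha> ^ (n - k) * (poly Q (of_nat k) * \<beta> ^ k))"
proof -
  define r where "r = \<beta> / \<alpha>"
  obtain R where R: "twisted_difference r 1 R = Q"
    using twisted_difference_surj by blast
  define g where "g k = r ^ k * poly R (of_nat k)" for k
  have "\<alpha> ^ (n - k) * (poly Q (of_nat k) * \<beta> ^ k) = \<alpha> ^ n * (g (Suc k) - g k)" if "k \<le> n" for n k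
  proof -
    have "\<alpha> ^ (n - k) * \<beta> ^ k = \<alpha> ^ n * r ^ k"
      using assms that by (simp add: r_def power_diff power_divide)
    moreover have "g (Suc k) - g k = r ^ k * poly Q (of_nat k)"
      unfolding g_def R[symmetric] by (simp add: algebra_simps)
    ultimately show ?thesis
      by (simp add: algebra_simps)
  qed
  then have "(\<Sum>k\<le>n. \<alpha> ^ (n - k) * (poly Q (of_nat k) * \<beta> ^ k)) = \<alpha> ^ n * (g (Suc n) - g 0)" for n
    by (simp add: sum_distrib_left[symmetric] lessThan_Suc_atMost[symmetric] sum_lessThan_telescope)
  also have "\<alpha> ^ n * (g (Suc n) - g 0)
      = poly (smult r (pcompose R [:1, 1:])) (of_nat n) * \<beta> ^ n + poly [:- poly R 0:] (of_nat n) * \<alpha> ^ n" for n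
    using assms by (simp add: g_def r_def poly_pcompose power_divide field_simps)
  finally have telescope: "(\<Sum>k\<le>n. \<alpha> ^ (n - k) * (poly Q (of_nat k) * \<beta> ^ k))
      = poly (smult r (pcompose R [:1, 1:])) (of_nat n) * \<beta> ^ n + poly [:- poly R 0:] (of_nat n) * \<alpha> ^ n"
    for n .
  show ?thesis
    unfolding telescope using assms by (intro is_exp_poly_add is_exp_poly_monomial)
qed

lemma is_exp_poly_geometric_convolution:
  fixes \<alpha> :: "'a::field_char_0"
  assumes "\<alpha> \<noteq> 0" "is_exp_poly a"
  shows "is_exp_poly (\<lambda>n. \<Sum>k\<le>n. \<alpha> ^ (n - k) * a k)"
proof -
  obtain B Q where B: "finite B" "0 \<notin> B" "a = exp_poly B Q"
    using assms(2) unfolding is_exp_poly_def by blast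
  have "(\<Sum>k\<le>n. \<alpha> ^ (n - k) * a k)
      = (\<Sum>\<beta>\<in>B. \<Sum>k\<le>n. \<alpha> ^ (n - k) * (poly (Q \<beta>) (of_nat k) * \<beta> ^ k))" for n
    unfolding B(3) exp_poly_def sum_distrib_left by (rule sum.swap)
  moreover have "is_exp_poly (\<lambda>n. \<Sum>\<beta>\<in>B. \<Sum>k\<le>n. \<alpha> ^ (n - k) * (poly (Q \<beta>) (of_nat k) * \<beta> ^ k))"
    using assms(1) B by (intro is_exp_poly_sum is_exp_poly_geometric_convolution_monomial) auto
  ultimately show ?thesis
    by simp
qed

lemma poly_eq_0_if_vanishes_at_nats:
  fixes P :: "'a::{idom,ring_char_0} poly"
  assumes "\<And>n. poly P (of_nat n) = 0"
  shows "P = 0"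
proof (rule ccontr)
  assume "P \<noteq> 0"
  then have "finite {x. poly P x = 0}"
    by (rule poly_roots_finite)
  moreover have "range (of_nat :: nat \<Rightarrow> 'a) \<subseteq> {x. poly P x = 0}"
    using assms by auto
  ultimately have "finite (range (of_nat :: nat \<Rightarrow> 'a))"
    by (rule finite_subset[rotated])
  then show False
    using range_inj_infinite[OF inj_of_nat] by blast
qed

lemma exp_poly_twisted_difference:
  fixes P :: "'a::comm_ring_1 \<Rightarrow> 'a poly"
  shows "exp_poly A (\<lambda>\<alpha>. twisted_difference \<alpha> a (P \<alpha>)) n = exp_poly A P (Suc n) - a * exp_poly A P n"
  by (simp add: exp_poly_def sum_distrib_left sum_subtractf algebra_simps)

text \<open>The step \<open>b(n) \<mapsto> b(n + 1) - a b(n)\<close> kills the top coefficient of the polynomial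
  attached to \<open>a\<close> and keeps the degree of all others, so induction on the total
  length of the coefficient lists applies.\<close>

lemma exp_poly_eq_0_imp_poly_eq_0:
  fixes P :: "'a::{idom,ring_char_0} \<Rightarrow> 'a poly"
  assumes "finite A" "0 \<notin> A" "\<And>n. exp_poly A P n = 0"
  shows "\<forall>\<alpha>\<in>A. P \<alpha> = 0"
  using assms(3)
proof (induction "\<Sum>\<alpha>\<in>A. length (coeffs (P \<alpha>))" arbitrary: P rule: less_induct)
  case less
  show ?case
  proof (rule ccontr)
    assume "\<not> (\<forall>\<alpha>\<in>A. P \<alpha> = 0)"
    then obtain a where a: "a \<in> A" "P a \<noteq> 0"
      by blast
    define P' where "P' \<alpha> = twisted_difference \<alpha> a (P \<alpha>)" for \<alpha>
    have "exp_poly A P' n = 0" for n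
      using less.prems unfolding P'_def exp_poly_twisted_difference by simp
    moreover have "(\<Sum>\<alpha>\<in>A. length (coeffs (P' \<alpha>))) < (\<Sum>\<alpha>\<in>A. length (coeffs (P \<alpha>)))"
    proof (rule sum_strict_mono_ex1[OF assms(1)])
      show "\<forall>\<alpha>\<in>A. length (coeffs (P' \<alpha>)) \<le> length (coeffs (P \<alpha>))"
      proof
        fix \<alpha>
        show "length (coeffs (P' \<alpha>)) \<le> length (coeffs (P \<alpha>))"
          using degree_twisted_difference_le[of \<alpha> a "P \<alpha>"]
          by (cases "P \<alpha> = 0"; cases "P' \<alpha> = 0") (simp_all add: P'_def length_coeffs_degree)
      qed
      have "P' a = 0 \<or> degree (P' a) < degree (P a)"
        by (rule degree_leI_coeff_eq_0)
          (simp_all add: P'_def degree_twisted_difference_le coeff_twisted_difference_degree)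
      then have "length (coeffs (P' a)) < length (coeffs (P a))"
        using a(2) by (cases "P' a = 0") (simp_all add: length_coeffs_degree)
      then show "\<exists>\<alpha>\<in>A. length (coeffs (P' \<alpha>)) < length (coeffs (P \<alpha>))"
        using a(1) by blast
    qed
    ultimately have P'_0: "\<forall>\<alpha>\<in>A. P' \<alpha> = 0"
      using less.hyps by blast
    have "P \<alpha> = 0" if "\<alpha> \<in> A" "\<alpha> \<noteq> a" for \<alpha>
    proof -
      have "coeff (P' \<alpha>) (degree (P \<alpha>)) = 0"
        using P'_0 that(1) by simp
      then show ?thesis
        using that(2) by (simp add: P'_def coeff_twisted_difference_degree)
    qed
    then have "exp_poly A P n = poly (P a) (of_nat n) * a ^ n" for n
      unfolding exp_poly_def using assms(1) a(1) by (simp add: sum.remove)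
    then have "poly (P a) (of_nat n) = 0" for n
      using less.prems assms(2) a(1) by (metis mult_eq_0_iff power_eq_0_iff)
    then show False
      using a(2) poly_eq_0_if_vanishes_at_nats by blast
  qed
qed

lemma exp_poly_unique:
  fixes P Q :: "'a::{idom,ring_char_0} \<Rightarrow> 'a poly"
  assumes "finite A" "0 \<notin> A" "\<And>n. exp_poly A P n = exp_poly A Q n" "\<alpha> \<in> A"
  shows "P \<alpha> = Q \<alpha>"
  using exp_poly_eq_0_imp_poly_eq_0[of A "\<lambda>\<alpha>. P \<alpha> - Q \<alpha>"] assms by (simp add: exp_poly_diff)

section \<open>Coefficients of rational series\<close>

lemma fps_nth_eq_geometric_convolution:
  fixes F :: "'a::comm_ring_1 fps"
  assumes "F * fps_of_poly [:1, - \<alpha>:] = G"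
  shows "F $ n = (\<Sum>k\<le>n. \<alpha> ^ (n - k) * G $ k)"
proof (induction n)
  case 0
  then show ?case
    using assms[symmetric] by simp
next
  case (Suc n)
  have linear: "fps_of_poly [:1, - \<alpha>:] = 1 - fps_const \<alpha> * fps_X"
    by (rule fps_ext) (simp add: coeff_pCons fps_X_nth split: nat.split)
  have "G = F - fps_const \<alpha> * (fps_X * F)"
    unfolding assms[symmetric] linear by (simp add: algebra_simps)
  then have "G $ Suc n = F $ Suc n - \<alpha> * F $ n"
    by simp
  moreover have "(\<Sum>k\<le>n. \<alpha> ^ (Suc n - k) * G $ k) = \<alpha> * (\<Sum>k\<le>n. \<alpha> ^ (n - k) * G $ k)"
    unfolding sum_distrib_left by (intro sum.cong) (simp_all add: Suc_diff_le)
  ultimately show ?case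
    using Suc by simp
qed

lemma is_exp_poly_divide_linear:
  fixes F :: "'a::field_char_0 fps"
  assumes "\<alpha> \<noteq> 0" "F * fps_of_poly [:1, - \<alpha>:] = H + fps_const q" "is_exp_poly (($) H)"
  shows "is_exp_poly (($) F)"
proof -
  have "($) F = (\<lambda>n. poly [:q:] (of_nat n) * \<alpha> ^ n + (\<Sum>k\<le>n. \<alpha> ^ (n - k) * H $ k))"
  proof
    fix n
    have "F $ n = (\<Sum>k\<le>n. \<alpha> ^ (n - k) * (H + fps_const q) $ k)"
      by (rule fps_nth_eq_geometric_convolution) (rule assms(2))
    also have "\<dots> = (\<Sum>k\<le>n. \<alpha> ^ (n - k) * H $ k + (if k = 0 then \<alpha> ^ n * q else 0))"
      by (intro sum.cong) (auto simp: algebra_simps)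
    finally show "F $ n = poly [:q:] (of_nat n) * \<alpha> ^ n + (\<Sum>k\<le>n. \<alpha> ^ (n - k) * H $ k)"
      by (simp add: sum.distrib)
  qed
  moreover have "is_exp_poly (\<lambda>n. poly [:q:] (of_nat n) * \<alpha> ^ n + (\<Sum>k\<le>n. \<alpha> ^ (n - k) * H $ k))"
    using assms(1,3)
    by (intro is_exp_poly_add is_exp_poly_monomial is_exp_poly_geometric_convolution)
  ultimately show ?thesis
    by (simp only:)
qed

lemma poly_root_linear_factor:
  fixes B :: "'a::field poly"
  assumes "poly B z = 0" "z \<noteq> 0"
  obtains B' where "B = [:1, - inverse z:] * B'"
proof -
  obtain B1 where "B = [:- z, 1:] * B1"
    using assms(1) by (metis poly_eq_0_iff_dvd dvdE)
  moreover have "[:1, - inverse z:] * smult (- z) B1 = smult (- z) [:1, - inverse z:] * B1"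
    by (simp only: mult_smult_left mult_smult_right)
  moreover have "smult (- z) [:1, - inverse z:] = [:- z, 1:]"
    using assms(2) by simp
  ultimately have "B = [:1, - inverse z:] * smult (- z) B1"
    by simp
  then show ?thesis
    using that by blast
qed

text \<open>Peeling off a root \<open>z\<close> of \<open>B\<close> writes \<open>F = G / (1 - x / z)\<close> where \<open>G\<close> is, up to its
  constant term, again a proper fraction with a denominator of smaller degree.\<close>

lemma is_exp_poly_fps_rational:
  fixes F :: "'a::{alg_closed_field,field_char_0} fps"
  assumes "F * fps_of_poly B = fps_of_poly A" "coeff B 0 \<noteq> 0" "degree A < degree B"
  shows "is_exp_poly (($) F)"
  using assms
proof (induction "degree B" arbitrary: A B F)
  case 0
  then show ?case
    by simp
next
  case (Suc m)
  obtain z where z: "poly B z = 0"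
    using alg_closed_imp_poly_has_root[of B] Suc.hyps(2) by auto
  have "z \<noteq> 0"
    using z Suc.prems(2) by (auto simp: poly_0_coeff_0)
  then obtain B' where B: "B = [:1, - inverse z:] * B'"
    using poly_root_linear_factor[OF z] by blast
  define \<alpha> where "\<alpha> = inverse z"
  have "B' \<noteq> 0"
    using B Suc.hyps(2) by auto
  then have deg_B': "degree B' = m"
    using Suc.hyps(2) \<open>z \<noteq> 0\<close> unfolding B by (subst (asm) degree_mult_eq) auto
  have B'_0: "coeff B' 0 \<noteq> 0"
    using Suc.prems(2) unfolding B by (simp add: coeff_mult)
  define G where "G = F * fps_of_poly [:1, - \<alpha>:]"
  define q where "q = coeff A m / lead_coeff B'"
  define R where "R = A - smult q B'"
  define H where "H = G - fps_const q"
  have "G * fps_of_poly B' = fps_of_poly A"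
    using Suc.prems(1) unfolding G_def B \<alpha>_def fps_of_poly_mult by (simp only: mult.assoc)
  then have HB': "H * fps_of_poly B' = fps_of_poly R"
    unfolding H_def R_def by (simp add: fps_of_poly_diff fps_of_poly_smult left_diff_distrib)
  have "degree R \<le> m" "coeff R m = 0"
    unfolding R_def using Suc.prems(3) \<open>B' \<noteq> 0\<close> deg_B' Suc.hyps(2)
    by (auto intro!: degree_diff_le simp: degree_smult_le q_def)
  then have "R = 0 \<or> degree R < m"
    by (rule degree_leI_coeff_eq_0)
  then have H: "is_exp_poly (($) H)"
  proof
    assume "R = 0"
    then have "H = 0"
      using HB' \<open>B' \<noteq> 0\<close> by (simp add: fps_of_poly_eq_iff[of _ 0, simplified])
    then have "($) H = (\<lambda>_. 0)"
      by (simp add: fun_eq_iff)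
    then show ?thesis
      using is_exp_poly_0 by simp
  next
    assume "degree R < m"
    then show ?thesis
      using Suc.hyps(1) HB' B'_0 deg_B' by blast
  qed
  have "\<alpha> \<noteq> 0"
    using \<open>z \<noteq> 0\<close> by (simp add: \<alpha>_def)
  moreover have "F * fps_of_poly [:1, - \<alpha>:] = H + fps_const q"
    by (simp add: G_def H_def)
  ultimately show ?case
    using H by (rule is_exp_poly_divide_linear)
qed

lemma ratfun_space_is_exp_poly:
  assumes "f \<in> ratfun_space"
  shows "is_exp_poly (\<lambda>n. complex_of_real (f $ n))"
proof -
  obtain A B where AB: "poly B 0 \<noteq> 0" "degree A < degree B" "f * fps_of_poly B = fps_of_poly A"
    using assms unfolding ratfun_space_iff by blast
  define F where "F = Abs_fps (\<lambda>n. complex_of_real (f $ n))"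
  have "F * fps_of_poly (map_poly of_real B) = fps_of_poly (map_poly of_real A)"
  proof (rule fps_ext)
    fix n
    have "complex_of_real ((f * fps_of_poly B) $ n) = of_real (coeff A n)"
      using AB(3) by simp
    then show "(F * fps_of_poly (map_poly of_real B)) $ n = fps_of_poly (map_poly of_real A) $ n"
      by (simp add: F_def fps_mult_nth coeff_map_poly)
  qed
  moreover have "coeff (map_poly complex_of_real B) 0 \<noteq> 0"
    using AB(1) by (simp add: coeff_map_poly poly_0_coeff_0)
  moreover have "degree (map_poly complex_of_real A) < degree (map_poly complex_of_real B)"
    using AB(2) by (simp add: degree_map_poly)
  ultimately have "is_exp_poly (($) F)"
    by (rule is_exp_poly_fps_rational)
  then show ?thesis
    by (simp add: F_def Abs_fps_inverse)
qed

section \<open>Eigenvalues\<close>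

lemma exp_poly_dilate:
  fixes P :: "'a::comm_semiring_1 \<Rightarrow> 'a poly"
  assumes "finite S"
  shows "exp_poly S P (p * n) = exp_poly ((\<lambda>\<alpha>. \<alpha> ^ p) ` S)
    (\<lambda>\<beta>. \<Sum>\<alpha>\<in>{\<alpha>\<in>S. \<alpha> ^ p = \<beta>}. pcompose (P \<alpha>) [:0, of_nat p:]) n"
proof -
  have "exp_poly S P (p * n) = (\<Sum>\<beta>\<in>(\<lambda>\<alpha>. \<alpha> ^ p) ` S.
      \<Sum>\<alpha>\<in>{\<alpha>\<in>S. \<alpha> ^ p = \<beta>}. poly (P \<alpha>) (of_nat (p * n)) * \<alpha> ^ (p * n))"
    unfolding exp_poly_def by (rule sum.image_gen[OF assms])
  also have "\<dots> = exp_poly ((\<lambda>\<alpha>. \<alpha> ^ p) ` S)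
      (\<lambda>\<beta>. \<Sum>\<alpha>\<in>{\<alpha>\<in>S. \<alpha> ^ p = \<beta>}. pcompose (P \<alpha>) [:0, of_nat p:]) n"
    unfolding exp_poly_def poly_sum sum_distrib_right
    by (intro sum.cong refl) (auto simp: poly_pcompose mult_ac simp flip: power_mult)
  finally show ?thesis .
qed

lemma exp_poly_dilation_eigen_eq:
  fixes P :: "'a::{idom,ring_char_0} \<Rightarrow> 'a poly"
  assumes "finite S" "0 \<notin> S" "p > 0" "\<And>n. exp_poly S P (p * n) = c * exp_poly S P n" "\<beta> \<in> S"
  shows "(\<Sum>\<alpha>\<in>{\<alpha>\<in>S. \<alpha> ^ p = \<beta>}. pcompose (P \<alpha>) [:0, of_nat p:]) = smult c (P \<beta>)"
proof -
  define T where "T = S \<union> (\<lambda>\<alpha>. \<alpha> ^ p) ` S"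
  define D where "D \<gamma> = (\<Sum>\<alpha>\<in>{\<alpha>\<in>S. \<alpha> ^ p = \<gamma>}. pcompose (P \<alpha>) [:0, of_nat p:])" for \<gamma>
  have T: "finite T" "0 \<notin> T"
    using assms(1-3) by (auto simp: T_def)
  have "D \<gamma> = 0" if "\<gamma> \<notin> (\<lambda>\<alpha>. \<alpha> ^ p) ` S" for \<gamma>
    using that unfolding D_def by (intro sum.neutral) auto
  then have dilated: "exp_poly ((\<lambda>\<alpha>. \<alpha> ^ p) ` S) D = exp_poly T D"
    using T(1) by (intro exp_poly_mono_support) (auto simp: T_def)
  have restricted: "exp_poly S P = exp_poly T (\<lambda>\<gamma>. if \<gamma> \<in> S then P \<gamma> else 0)"
    using T(1) by (subst exp_poly_restrict, intro exp_poly_mono_support) (auto simp: T_def)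
  have "exp_poly S P (p * n) = exp_poly ((\<lambda>\<alpha>. \<alpha> ^ p) ` S) D n" for n
    unfolding D_def[abs_def] by (rule exp_poly_dilate[OF assms(1)])
  then have "exp_poly T D n = exp_poly S P (p * n)" for n
    by (simp add: dilated)
  also have "\<dots> n = c * exp_poly S P n" for n
    by (rule assms(4))
  also have "\<dots> n = exp_poly T (\<lambda>\<gamma>. smult c (if \<gamma> \<in> S then P \<gamma> else 0)) n" for n
    by (simp add: restricted exp_poly_smult)
  finally have "D \<beta> = smult c (if \<beta> \<in> S then P \<beta> else 0)"
    by (rule exp_poly_unique[OF T]) (simp add: T_def assms(5))
  then show ?thesis
    using assms(5) by (simp add: D_def)
qed

text \<open>Every \<open>\<beta> \<in> Z\<close> has a preimage in \<open>Z\<close>, so by counting \<open>\<phi>\<close> permutes \<open>Z\<close>; the relation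
  becomes \<open>c e(\<phi> \<alpha>) = q e(\<alpha>)\<close>, and taking the product over \<open>Z\<close> gives the claim.\<close>

lemma pushforward_eigen_power_card:
  fixes e :: "'a \<Rightarrow> 'b::idom"
  assumes "finite Z" "c \<noteq> 0" "\<And>\<alpha>. \<alpha> \<in> Z \<Longrightarrow> e \<alpha> \<noteq> 0"
    and eigen: "\<And>\<beta>. \<beta> \<in> Z \<Longrightarrow> c * e \<beta> = q * (\<Sum>\<alpha>\<in>{\<alpha>\<in>Z. \<phi> \<alpha> = \<beta>}. e \<alpha>)"
  shows "c ^ card Z = q ^ card Z"
proof -
  define Z' where "Z' = {\<alpha>\<in>Z. \<phi> \<alpha> \<in> Z}"
  have "{\<alpha>\<in>Z. \<phi> \<alpha> = \<beta>} \<noteq> {}" if "\<beta> \<in> Z" for \<beta>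
  proof
    assume no_preimage: "{\<alpha>\<in>Z. \<phi> \<alpha> = \<beta>} = {}"
    have "c * e \<beta> = 0"
      using eigen[OF that] unfolding no_preimage by simp
    then show False
      using assms(2) assms(3)[OF that] by simp
  qed
  then have "Z \<subseteq> \<phi> ` Z'"
    by (force simp: Z'_def)
  then have "card Z \<le> card Z'"
    using assms(1) card_mono[OF _ \<open>Z \<subseteq> \<phi> ` Z'\<close>] card_image_le[of Z' \<phi>]
    by (simp add: Z'_def)
  moreover have "Z' \<subseteq> Z"
    by (auto simp: Z'_def)
  ultimately have "Z' = Z"
    using assms(1) by (meson card_mono card_subset_eq le_antisym)
  then have "\<phi> ` Z = Z"
    using \<open>Z \<subseteq> \<phi> ` Z'\<close> by (auto simp: Z'_def)
  then have inj: "inj_on \<phi> Z"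
    using assms(1) by (intro finite_surj_inj) auto
  have step: "c * e (\<phi> \<alpha>) = q * e \<alpha>" if "\<alpha> \<in> Z" for \<alpha>
  proof -
    have "{\<gamma>\<in>Z. \<phi> \<gamma> = \<phi> \<alpha>} = {\<alpha>}"
      using inj that by (auto dest: inj_onD)
    then show ?thesis
      using eigen[of "\<phi> \<alpha>"] \<open>\<phi> ` Z = Z\<close> that by auto
  qed
  have "c ^ card Z * prod e Z = (\<Prod>\<alpha>\<in>Z. c * e (\<phi> \<alpha>))"
    using prod.reindex[OF inj, of e] \<open>\<phi> ` Z = Z\<close> by (simp add: prod.distrib)
  also have "\<dots> = q ^ card Z * prod e Z"
    using step by (simp add: prod.distrib)
  finally show ?thesis
    using assms(1,3) by (simp add: prod_zero_iff)
qed

text \<open>Compare the coefficients of \<open>x\<^sup>j\<close>, \<open>j = deg P\<^sub>\<alpha>\<^sub>0\<close>, in the identity of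
  \<open>exp_poly_dilation_eigen_eq\<close>: dilation multiplies them by \<open>p\<^sup>j\<close>.\<close>

lemma exp_poly_dilation_eigenvalue:
  fixes P :: "'a::{idom,ring_char_0} \<Rightarrow> 'a poly"
  assumes "finite S" "0 \<notin> S" "p > 0" "c \<noteq> 0"
    and eigen: "\<And>n. exp_poly S P (p * n) = c * exp_poly S P n"
    and "\<alpha>\<^sub>0 \<in> S" "P \<alpha>\<^sub>0 \<noteq> 0"
  shows "\<exists>j L. L > 0 \<and> c ^ L = (of_nat p ^ j) ^ L"
proof -
  define j where "j = degree (P \<alpha>\<^sub>0)"
  define e where "e \<alpha> = coeff (P \<alpha>) j" for \<alpha>
  define Z where "Z = {\<alpha>\<in>S. e \<alpha> \<noteq> 0}"
  have "\<alpha>\<^sub>0 \<in> Z"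
    using assms(6,7) by (simp add: Z_def e_def j_def)
  have "finite Z"
    using assms(1) by (simp add: Z_def)
  have eigen_Z: "c * e \<beta> = of_nat p ^ j * (\<Sum>\<alpha>\<in>{\<alpha>\<in>Z. \<alpha> ^ p = \<beta>}. e \<alpha>)"
    if "\<beta> \<in> Z" for \<beta>
  proof -
    have "c * e \<beta> = coeff (\<Sum>\<alpha>\<in>{\<alpha>\<in>S. \<alpha> ^ p = \<beta>}. pcompose (P \<alpha>) [:0, of_nat p:]) j"
      using exp_poly_dilation_eigen_eq[OF assms(1-3) eigen, of \<beta>] that
      by (simp add: Z_def e_def)
    also have "\<dots> = (\<Sum>\<alpha>\<in>{\<alpha>\<in>S. \<alpha> ^ p = \<beta>}. of_nat p ^ j * e \<alpha>)"
      by (simp add: coeff_sum coeff_pcompose_linear e_def)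
    also have "\<dots> = (\<Sum>\<alpha>\<in>{\<alpha>\<in>Z. \<alpha> ^ p = \<beta>}. of_nat p ^ j * e \<alpha>)"
      using assms(1) by (intro sum.mono_neutral_right) (auto simp: Z_def)
    finally show ?thesis
      by (simp add: sum_distrib_left)
  qed
  have "c ^ card Z = (of_nat p ^ j) ^ card Z"
    by (rule pushforward_eigen_power_card[OF \<open>finite Z\<close> assms(4) _ eigen_Z]) (simp add: Z_def)
  moreover have "card Z > 0"
    using \<open>finite Z\<close> \<open>\<alpha>\<^sub>0 \<in> Z\<close> card_gt_0_iff by blast
  ultimately show ?thesis
    by blast
qed

lemma point_spectrum_U_subset:
  assumes "p > 1" "c \<in> point_spectrum_U p" "c \<noteq> 0"
  shows "\<exists>k::nat. c = real p ^ k \<or> c = - (real p ^ k)"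
proof -
  obtain f where f: "f \<in> ratfun_space" "f \<noteq> 0" "\<And>n. f $ (p * n) = c * f $ n"
    using assms(2) unfolding point_spectrum_U_def hecke_U_eigen_iff by blast
  obtain S P where S: "finite S" "0 \<notin> S"
    and f_exp: "(\<lambda>n. complex_of_real (f $ n)) = exp_poly S P"
    using ratfun_space_is_exp_poly[OF f(1)] unfolding is_exp_poly_def by blast
  have "\<exists>\<alpha>\<^sub>0\<in>S. P \<alpha>\<^sub>0 \<noteq> 0"
  proof (rule ccontr)
    assume "\<not> (\<exists>\<alpha>\<^sub>0\<in>S. P \<alpha>\<^sub>0 \<noteq> 0)"
    then have "exp_poly S P n = 0" for n
      by (simp add: exp_poly_def)
    then have "f $ n = 0" for n
      using fun_cong[OF f_exp, of n] by simp
    then show False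
      using f(2) by (simp add: fps_eq_iff)
  qed
  then obtain \<alpha>\<^sub>0 where \<alpha>\<^sub>0: "\<alpha>\<^sub>0 \<in> S" "P \<alpha>\<^sub>0 \<noteq> 0"
    by blast
  have dilation: "exp_poly S P (p * n) = complex_of_real c * exp_poly S P n" for n
    using f(3)[of n] unfolding f_exp[symmetric] by simp
  have "p > 0" "complex_of_real c \<noteq> 0"
    using assms(1,3) by simp_all
  then obtain j L where "L > 0" "complex_of_real c ^ L = (of_nat p ^ j) ^ L"
    using exp_poly_dilation_eigenvalue[OF S _ _ dilation \<alpha>\<^sub>0] by blast
  then have "complex_of_real (c ^ L) = complex_of_real ((real p ^ j) ^ L)"
    by simp
  then have "\<bar>c\<bar> ^ L = (real p ^ j) ^ L"
    unfolding of_real_eq_iff by (simp flip: power_abs)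
  then have "\<bar>c\<bar> = real p ^ j"
    by (rule power_eq_imp_eq_base) (simp_all add: \<open>L > 0\<close>)
  then have "c = real p ^ j \<or> c = - (real p ^ j)"
    by linarith
  then show ?thesis
    by blast
qed

theorem mainTheorem1:
  fixes p :: nat
  assumes "p > 1"
  shows "point_spectrum_U p = {c. \<exists>k::nat. c = real p ^ k \<or> c = - (real p ^ k)} \<union> {0}"
  using point_spectrum_U_superset[OF assms] point_spectrum_U_subset[OF assms] by blast

end
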